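(* (i) Let $A_1 = \begin{pmatrix} \frac{\sqrt{2}}{2} & 0 \\ 0 & \frac{\sqrt{2}}{2} \end{pmatrix}$ and $B_1 = \begin{pmatrix} 0 & x \\ y & 0 \end{pmatrix}$, where $x,y\in\mathbb{C}$ satisfy $|x|,|y| \leq \frac{\sqrt{2}}{2}$ and are not both zero. Then there exist $p_1, p_2\in \mathbb{C} \setminus \{0\}$ satisfying $|p_1|^2 + |p_2|^2 = 1$ such that the maximal singular value of the matrix $C_1 = p_1 A_1 + p_2 B_1$ is strictly greater than $\frac{\sqrt{2}}{2}$. (ii) Let $A_2=\begin{pmatrix} \frac{\sqrt{2}}{2} & 0 \\ 0 & 0 \end{pmatrix}$ and $B_2=\begin{pmatrix} 0 & \frac{\sqrt{2}}{2} \\ z & 0 \end{pmatrix}$, where $z\in\mathbb{C}$ satisfies $0<|z| \leq \frac{\sqrt{2}}{2}$. Then there exist $p_1, p_2\in \mathbb{C} \setminus \{0\}$ satisfying $|p_1|^2 + |p_2|^2 = 1$ such that the maximal singular value of the matrix $C_2= p_1 A_2 + p_2 B_2$ is strictly greater than $\frac{\sqrt{2}}{2}$.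
   Context: All matrices are $2\times 2$ complex matrices; the maximal singular value of a matrix $C$ is the square root of the largest eigenvalue of $C^\dagger C$. *)

theory Defs
  imports "HOL-Analysis.Analysis"
begin

definition mat2 :: "complex \<Rightarrow> complex \<Rightarrow> complex \<Rightarrow> complex \<Rightarrow> complex^2^2" where
  "mat2 a b c d = (\<chi> i j. if i = 1 then (if j = 1 then a else b) else (if j = 1 then c else d))"

definition mat_scale :: "complex \<Rightarrow> complex^2^2 \<Rightarrow> complex^2^2" where
  "mat_scale c M = (\<chi> i j. c * M $ i $ j)"

definition adj_mat :: "complex^2^2 \<Rightarrow> complex^2^2" where
  "adj_mat C = (\<chi> i j. cnj (C $ j $ i))"

definition eigenvalues_mat :: "complex^2^2 \<Rightarrow> complex set" where
  "eigenvalues_mat M = {l. \<exists>v. v \<noteq> 0 \<and> M *v v = l *s v}"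

text \<open>Maximal singular value: square root of the largest eigenvalue of C^dagger C
  (these eigenvalues are real since C^dagger C is Hermitian).\<close>
definition max_singular_value :: "complex^2^2 \<Rightarrow> real" where
  "max_singular_value C = sqrt (Max (Re ` eigenvalues_mat (adj_mat C ** C)))"

end

theory Submission
  imports Defs "HOL-Computational_Algebra.Polynomial"
begin

text \<open>For \<open>C = [[a, b], [c, d]]\<close> the Gram matrix \<open>C\<^sup>\<dagger>C\<close> has diagonal entries
  \<open>|a|\<^sup>2 + |c|\<^sup>2\<close>, \<open>|b|\<^sup>2 + |d|\<^sup>2\<close> and off-diagonal entry \<open>q = cnj a b + cnj c d\<close>, so its
  largest eigenvalue is at least half of \<open>|a|\<^sup>2 + |b|\<^sup>2 + |c|\<^sup>2 + |d|\<^sup>2 + 2|q|\<close>.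
  Hence the maximal singular value exceeds \<open>\<surd>2/2\<close> as soon as this quantity exceeds 1.
  In (i) the coefficients are chosen as \<open>p\<^sub>1 = \<alpha>\<close>, \<open>p\<^sub>2 = \<alpha> t w\<close> with a unimodular \<open>w\<close>
  making \<open>t = |w x + cnj (w y)|\<close> positive and \<open>\<alpha> = 1/\<surd>(1 + t\<^sup>2)\<close>; the quantity is then at
  least \<open>\<alpha>\<^sup>2 (1 + \<surd>2 t\<^sup>2) > 1\<close>. In (ii) \<open>p\<^sub>1 = p\<^sub>2 = \<surd>2/2\<close> gives \<open>1 + |z|\<^sup>2/2\<close>.\<close>

lemma mat2_nth [simp]:
  "mat2 a b c d $ 1 $ 1 = a" "mat2 a b c d $ 1 $ 2 = b" "mat2 a b c d $ 2 $ 1 = c" "mat2 a b c d $ 2 $ 2 = d"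
  by (simp_all add: mat2_def)

lemma mat_mult_vector: "mat c *v v = c *s v"
  by (simp add: vec_eq_iff matrix_vector_mult_def mat_def if_distrib[of "\<lambda>x. x * _"] cong: if_cong)

lemma eigenvalues_mat_iff_det: "l \<in> eigenvalues_mat M \<longleftrightarrow> det (M - mat l) = 0"
proof -
  have "det (M - mat l) \<noteq> 0 \<longleftrightarrow> (\<forall>v. (M - mat l) *v v = 0 \<longrightarrow> v = 0)"
    by (simp add: invertible_det_nz[symmetric] invertible_left_inverse matrix_left_invertible_ker)
  then show ?thesis
    by (auto simp: eigenvalues_mat_def matrix_vector_mult_diff_rdistrib mat_mult_vector)
qed

lemma eigenvalues_mat_iff:
  "l \<in> eigenvalues_mat M \<longleftrightarrow> (l - M$1$1) * (l - M$2$2) = M$1$2 * M$2$1"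
  by (simp add: eigenvalues_mat_iff_det det_2 mat_def algebra_simps)

lemma finite_eigenvalues_mat: "finite (eigenvalues_mat M)"
proof -
  let ?p = "[:M$1$1 * M$2$2 - M$1$2 * M$2$1, - (M$1$1 + M$2$2), 1:]"
  have "eigenvalues_mat M = {l. poly ?p l = 0}"
    by (auto simp: eigenvalues_mat_iff algebra_simps)
  then show ?thesis
    using poly_roots_finite[of ?p] by simp
qed

lemma adj_mat_mult_mat2:
  "adj_mat (mat2 a b c d) ** mat2 a b c d =
     mat2 (cnj a * a + cnj c * c) (cnj a * b + cnj c * d) (cnj b * a + cnj d * c) (cnj b * b + cnj d * d)"
  by (simp add: vec_eq_iff forall_2 adj_mat_def mat2_def matrix_matrix_mult_def sum_2)

lemma mat_scale_add_mat2:
  "mat_scale p1 (mat2 a b c d) + mat_scale p2 (mat2 a' b' c' d') =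
     mat2 (p1 * a + p2 * a') (p1 * b + p2 * b') (p1 * c + p2 * c') (p1 * d + p2 * d')"
  by (simp add: vec_eq_iff forall_2 mat2_def mat_scale_def)

lemma max_singular_value_mat2_ge:
  "sqrt ((cmod a ^ 2 + cmod b ^ 2 + cmod c ^ 2 + cmod d ^ 2 + 2 * cmod (cnj a * b + cnj c * d)) / 2)
     \<le> max_singular_value (mat2 a b c d)"
proof -
  define H where "H = adj_mat (mat2 a b c d) ** mat2 a b c d"
  define A where "A = cmod a ^ 2 + cmod c ^ 2"
  define D where "D = cmod b ^ 2 + cmod d ^ 2"
  define q where "q = cnj a * b + cnj c * d"
  define r where "r = sqrt ((A - D) ^ 2 + 4 * cmod q ^ 2)"
  define l where "l = (A + D + r) / 2"
  have H: "H = mat2 (of_real A) q (cnj q) (of_real D)"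
    unfolding H_def adj_mat_mult_mat2 A_def D_def q_def of_real_add complex_norm_square
    by (simp add: mult.commute)
  have "r ^ 2 = (A - D) ^ 2 + 4 * cmod q ^ 2"
    by (simp add: r_def)
  then have "(l - A) * (l - D) = cmod q ^ 2"
    by (simp add: l_def field_simps power2_eq_square)
  then have "(of_real l - of_real A) * (of_real l - of_real D) = q * cnj q"
    by (metis complex_norm_square of_real_diff of_real_mult)
  then have "of_real l \<in> eigenvalues_mat H"
    by (simp only: H eigenvalues_mat_iff mat2_nth)
  then have "l \<le> Max (Re ` eigenvalues_mat H)"
    using finite_eigenvalues_mat by (metis Max_ge Re_complex_of_real finite_imageI image_eqI)
  moreover have "2 * cmod q \<le> r"
    unfolding r_def by (rule real_le_rsqrt) (simp add: power_mult_distrib)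
  ultimately have "(A + D + 2 * cmod q) / 2 \<le> Max (Re ` eigenvalues_mat H)"
    unfolding l_def by (simp add: field_simps)
  then show ?thesis
    unfolding max_singular_value_def H_def[symmetric] A_def D_def q_def
    by (simp add: add_ac)
qed

lemma max_singular_value_mat2_gt:
  assumes "1 < cmod a ^ 2 + cmod b ^ 2 + cmod c ^ 2 + cmod d ^ 2 + 2 * cmod (cnj a * b + cnj c * d)"
  shows "sqrt 2 / 2 < max_singular_value (mat2 a b c d)"
proof -
  have "sqrt 2 / 2 = sqrt (1 / 2)"
    by (simp add: real_sqrt_divide divide_simps)
  also have "\<dots> < sqrt ((cmod a ^ 2 + cmod b ^ 2 + cmod c ^ 2 + cmod d ^ 2
                         + 2 * cmod (cnj a * b + cnj c * d)) / 2)"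
    using assms by simp
  also have "\<dots> \<le> max_singular_value (mat2 a b c d)"
    by (rule max_singular_value_mat2_ge)
  finally show ?thesis .
qed

lemma exists_unimodular_conj_sum_nonzero:
  fixes x y :: complex
  assumes "x \<noteq> 0 \<or> y \<noteq> 0"
  obtains w where "cmod w = 1" "w * x + cnj (w * y) \<noteq> 0"
proof (cases "x + cnj y = 0")
  case True
  then have "x = - cnj y" "y \<noteq> 0"
    using assms by (auto simp: eq_neg_iff_add_eq_0)
  then have "\<i> * x + cnj (\<i> * y) \<noteq> 0"
    by simp
  then show ?thesis
    by (intro that[of \<i>]) simp_all
next
  case False
  then show ?thesis
    using that[of 1] by simp
qed

lemma exists_pencil_scalar_antidiag_max_singular_value_gt:
  fixes x y :: complex
  assumes "x \<noteq> 0 \<or> y \<noteq> 0"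
  shows "\<exists>p1 p2. p1 \<noteq> 0 \<and> p2 \<noteq> 0 \<and> cmod p1 ^ 2 + cmod p2 ^ 2 = 1 \<and>
           sqrt 2 / 2 < max_singular_value (mat_scale p1 (mat2 (sqrt 2 / 2) 0 0 (sqrt 2 / 2))
                                            + mat_scale p2 (mat2 0 x y 0))"
proof -
  obtain w where w: "cmod w = 1" and q: "w * x + cnj (w * y) \<noteq> 0"
    using exists_unimodular_conj_sum_nonzero assms by blast
  define t where "t = cmod (w * x + cnj (w * y))"
  define \<alpha> where "\<alpha> = 1 / sqrt (1 + t ^ 2)"
  define s :: real where "s = sqrt 2 / 2"
  define p1 where "p1 = complex_of_real \<alpha>"
  define p2 where "p2 = complex_of_real (\<alpha> * t) * w"
  have t: "t > 0"
    using q by (simp add: t_def)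
  have pos: "1 + t ^ 2 > 0"
    by (simp add: add_pos_nonneg)
  have \<alpha>: "\<alpha> > 0"
    using pos by (simp add: \<alpha>_def)
  have unit: "\<alpha> ^ 2 * (1 + t ^ 2) = 1"
    using pos by (simp add: \<alpha>_def power_divide)
  have s: "s > 0" "s ^ 2 = 1 / 2" "2 * s = sqrt 2"
    by (simp_all add: s_def power_divide)
  define C where "C = mat2 (p1 * s) (p2 * x) (p2 * y) (p1 * s)"
  have C: "mat_scale p1 (mat2 (sqrt 2 / 2) 0 0 (sqrt 2 / 2)) + mat_scale p2 (mat2 0 x y 0) = C"
    by (simp add: C_def s_def mat_scale_add_mat2 mult.commute)
  have diag: "cmod (p1 * s) ^ 2 = \<alpha> ^ 2 / 2"
    using s by (simp add: p1_def norm_mult power_mult_distrib)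
  have cross: "cnj (p1 * s) * (p2 * x) + cnj (p2 * y) * (p1 * s)
                 = complex_of_real (\<alpha> ^ 2 * t * s) * (w * x + cnj (w * y))"
    by (simp add: p1_def p2_def algebra_simps power2_eq_square)
  have "cmod (complex_of_real (\<alpha> ^ 2 * t * s)) = \<alpha> ^ 2 * t * s"
    unfolding norm_of_real using \<alpha> t s by simp
  then have off: "2 * cmod (cnj (p1 * s) * (p2 * x) + cnj (p2 * y) * (p1 * s)) = sqrt 2 * (\<alpha> ^ 2 * t ^ 2)"
    unfolding cross norm_mult t_def[symmetric] s(3)[symmetric] by (simp add: power2_eq_square)
  have "1 = \<alpha> ^ 2 + \<alpha> ^ 2 * t ^ 2"
    using unit by (simp add: algebra_simps)
  also have "\<dots> < \<alpha> ^ 2 / 2 + \<alpha> ^ 2 / 2 + sqrt 2 * (\<alpha> ^ 2 * t ^ 2)"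
    using \<alpha> t by simp
  also have "\<dots> \<le> cmod (p1 * s) ^ 2 + cmod (p2 * x) ^ 2 + cmod (p2 * y) ^ 2 + cmod (p1 * s) ^ 2
                  + 2 * cmod (cnj (p1 * s) * (p2 * x) + cnj (p2 * y) * (p1 * s))"
    unfolding diag off by simp
  finally have gt: "sqrt 2 / 2 < max_singular_value C"
    unfolding C_def by (rule max_singular_value_mat2_gt)
  have norms: "cmod p1 = \<alpha>" "cmod p2 = \<alpha> * t"
    unfolding p1_def p2_def norm_mult norm_of_real w using \<alpha> t by simp_all
  then have "p1 \<noteq> 0" "p2 \<noteq> 0"
    using \<alpha> t by auto
  moreover have "cmod p1 ^ 2 + cmod p2 ^ 2 = 1"
    using unit by (simp add: norms power_mult_distrib algebra_simps)
  ultimately show ?thesis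
    using gt[folded C] by blast
qed

lemma exists_pencil_corner_max_singular_value_gt:
  fixes z :: complex
  assumes "z \<noteq> 0"
  shows "\<exists>p1 p2. p1 \<noteq> 0 \<and> p2 \<noteq> 0 \<and> cmod p1 ^ 2 + cmod p2 ^ 2 = 1 \<and>
           sqrt 2 / 2 < max_singular_value (mat_scale p1 (mat2 (sqrt 2 / 2) 0 0 0)
                                            + mat_scale p2 (mat2 0 (sqrt 2 / 2) z 0))"
proof -
  define s :: real where "s = sqrt 2 / 2"
  have s: "s > 0" "s ^ 2 = 1 / 2"
    by (simp_all add: s_def power_divide)
  then have ss: "complex_of_real s * complex_of_real s = 1 / 2"
    by (metis of_real_mult power2_eq_square of_real_divide of_real_1 of_real_numeral)
  have C: "mat_scale s (mat2 (sqrt 2 / 2) 0 0 0) + mat_scale s (mat2 0 (sqrt 2 / 2) z 0)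
             = mat2 (1 / 2) (1 / 2) (s * z) 0"
    by (simp add: mat_scale_add_mat2 ss flip: s_def)
  have "1 < cmod (1 / 2 :: complex) ^ 2 + cmod (1 / 2 :: complex) ^ 2 + cmod (s * z) ^ 2 + cmod (0 :: complex) ^ 2
            + 2 * cmod (cnj (1 / 2) * (1 / 2) + cnj (s * z) * 0)"
    using s assms by (simp add: norm_mult power_mult_distrib power2_eq_square)
  then have "sqrt 2 / 2 < max_singular_value (mat2 (1 / 2) (1 / 2) (s * z) 0)"
    by (rule max_singular_value_mat2_gt)
  moreover have "complex_of_real s \<noteq> 0" "cmod (complex_of_real s) ^ 2 + cmod (complex_of_real s) ^ 2 = 1"
    using s by simp_all
  ultimately show ?thesis
    unfolding C[symmetric] by blast
qed

theorem lemma10: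
  shows "(\<forall>x y :: complex. cmod x \<le> sqrt 2 / 2 \<and> cmod y \<le> sqrt 2 / 2 \<and> \<not> (x = 0 \<and> y = 0) \<longrightarrow>
           (\<exists>p1 p2 :: complex. p1 \<noteq> 0 \<and> p2 \<noteq> 0 \<and> (cmod p1)^2 + (cmod p2)^2 = 1 \<and>
              max_singular_value (mat_scale p1 (mat2 (sqrt 2 / 2) 0 0 (sqrt 2 / 2))
                                  + mat_scale p2 (mat2 0 x y 0)) > sqrt 2 / 2))
       \<and> (\<forall>z :: complex. 0 < cmod z \<and> cmod z \<le> sqrt 2 / 2 \<longrightarrow>
           (\<exists>p1 p2 :: complex. p1 \<noteq> 0 \<and> p2 \<noteq> 0 \<and> (cmod p1)^2 + (cmod p2)^2 = 1 \<and>
              max_singular_value (mat_scale p1 (mat2 (sqrt 2 / 2) 0 0 0)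
                                  + mat_scale p2 (mat2 0 (sqrt 2 / 2) z 0)) > sqrt 2 / 2))"
  using exists_pencil_scalar_antidiag_max_singular_value_gt exists_pencil_corner_max_singular_value_gt
  by auto

end
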